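(* Let $M$ be a perfect matching in a graph $G$ and let $A \subseteq V(M)$ be a set containing at most one vertex from each edge of $M$. Suppose that $W$ is a shifted $M$-walk both of whose endpoints lie in $A$. Then $W$ contains a shifted $M$-walk $W'$ such that both endpoints of $W'$ lie in $A$ and no other vertices of $W'$ lie in $A$.
   Context: Given a perfect matching $M$ in a graph $G$, a shifted $M$-walk with endpoints $a = v_1$ and $b = v_{2\ell}$ is a walk $v_1 v_2 \dots v_{2\ell}$ in $G$ such that $v_{2i}v_{2i+1} \in M$ for every $1 \leq i \leq \ell - 1$ and $v_{2i-1}v_{2i} \notin M$ for every $1 \leq i \leq \ell$. *)

theory Defs
  imports Main
begin

definition graph :: "'a set \<Rightarrow> 'a set set \<Rightarrow> bool" where
  "graph V E \<longleftrightarrow> (\<forall>e\<in>E. \<exists>u v. e = {u, v} \<and> u \<noteq> v \<and> u \<in> V \<and> v \<in> V)"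

definition perfect_matching :: "'a set \<Rightarrow> 'a set set \<Rightarrow> 'a set set \<Rightarrow> bool" where
  "perfect_matching V E M \<longleftrightarrow> M \<subseteq> E \<and> (\<forall>v\<in>V. \<exists>!e. e \<in> M \<and> v \<in> e)"

text \<open>A shifted M-walk v_1 ... v_{2l} (l >= 1), as a list (0-indexed). Edge between
  positions k and k+1 (0-indexed) is v_{k+1} v_{k+2}: it lies in M iff k is odd.\<close>
definition shifted_walk :: "'a set \<Rightarrow> 'a set set \<Rightarrow> 'a set set \<Rightarrow> 'a list \<Rightarrow> bool" where
  "shifted_walk V E M W \<longleftrightarrow>
     W \<noteq> [] \<and> even (length W) \<and> set W \<subseteq> V \<and>
     (\<forall>k. Suc k < length W \<longrightarrow> {W ! k, W ! Suc k} \<in> E) \<and>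
     (\<forall>k. Suc k < length W \<longrightarrow> (odd k \<longleftrightarrow> {W ! k, W ! Suc k} \<in> M))"

end

theory Submission
  imports Defs
begin

text \<open>Index the walk from 0. It starts at an even and ends at an odd position, both in A, so
  somewhere an even A-position i is followed by an odd A-position j with no A-position strictly
  in between. The segment from i to j begins and ends with a non-matching edge, hence is again a
  shifted walk.\<close>

lemma even_odd_consecutive_hits:
  fixes n :: nat
  assumes "even n" "0 < n" "P 0" "P (n - 1)"
  obtains i j where "even i" "odd j" "i < j" "j < n" "P i" "P j"
    "\<And>k. i < k \<Longrightarrow> k < j \<Longrightarrow> \<not> P k"
proof -
  define j where "j = (LEAST j. odd j \<and> j < n \<and> P j)"
  have j: "odd j" "j < n" "P j"
    using LeastI[of "\<lambda>j. odd j \<and> j < n \<and> P j" "n - 1"] assms unfolding j_def by auto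
  have j_least: "\<And>k. odd k \<Longrightarrow> k < n \<Longrightarrow> P k \<Longrightarrow> j \<le> k"
    unfolding j_def by (simp add: Least_le)
  have "0 < j" using j by (cases j) auto
  define i where "i = (GREATEST i. i < j \<and> P i)"
  have i: "i < j" "P i"
    using GreatestI_nat[of "\<lambda>i. i < j \<and> P i" 0 j] \<open>0 < j\<close> assms(3) unfolding i_def by auto
  have i_greatest: "\<And>k. k < j \<Longrightarrow> P k \<Longrightarrow> k \<le> i"
    unfolding i_def by (rule Greatest_le_nat[of _ _ j]) auto
  have "even i" using i j j_least[of i] by fastforce
  moreover have "\<And>k. i < k \<Longrightarrow> k < j \<Longrightarrow> \<not> P k" using i_greatest by fastforce
  ultimately show thesis using that i j by blast
qed

lemma take_segment_drop_eq:
  assumes "i < j" "j < length xs"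
  shows "xs = take i xs @ take (Suc j - i) (drop i xs) @ drop (Suc j) xs"
proof -
  have "take (Suc j) xs = take i xs @ take (Suc j - i) (drop i xs)"
    using take_add[of i "Suc j - i" xs] assms by simp
  then show ?thesis by (metis append.assoc append_take_drop_id)
qed

lemma shifted_walk_segment:
  assumes walk: "shifted_walk V E M W"
    and "even i" "odd j" "i < j" "j < length W"
  shows "shifted_walk V E M (take (Suc j - i) (drop i W))"
    (is "shifted_walk V E M ?S")
proof -
  have len: "length ?S = Suc j - i" using assms by auto
  have "set ?S \<subseteq> V"
    using walk unfolding shifted_walk_def by (meson order_trans set_drop_subset set_take_subset)
  moreover have "{?S ! k, ?S ! Suc k} \<in> E" "odd k \<longleftrightarrow> {?S ! k, ?S ! Suc k} \<in> M"
    if "Suc k < length ?S" for k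
  proof -
    have "?S ! k = W ! (i + k)" "?S ! Suc k = W ! Suc (i + k)" and k: "Suc (i + k) < length W"
      using that assms by auto
    moreover have "odd k \<longleftrightarrow> odd (i + k)" using \<open>even i\<close> by simp
    moreover have "{W ! (i + k), W ! Suc (i + k)} \<in> E"
      "odd (i + k) \<longleftrightarrow> {W ! (i + k), W ! Suc (i + k)} \<in> M"
      using walk k unfolding shifted_walk_def by blast+
    ultimately show "{?S ! k, ?S ! Suc k} \<in> E" "odd k \<longleftrightarrow> {?S ! k, ?S ! Suc k} \<in> M"
      by simp_all
  qed
  ultimately show ?thesis
    using len assms unfolding shifted_walk_def by auto
qed

theorem lemma5p2:
  fixes V :: "'a set" and E M :: "'a set set" and A :: "'a set" and W :: "'a list"
  assumes "graph V E"
    and "perfect_matching V E M"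
    and "A \<subseteq> \<Union>M"
    and "\<forall>e\<in>M. card (A \<inter> e) \<le> 1"
    and "shifted_walk V E M W"
    and "hd W \<in> A" and "last W \<in> A"
  shows "\<exists>W' xs ys. W = xs @ W' @ ys \<and> shifted_walk V E M W' \<and>
           hd W' \<in> A \<and> last W' \<in> A \<and>
           (\<forall>k. 0 < k \<and> k < length W' - 1 \<longrightarrow> W' ! k \<notin> A)"
proof -
  have "W \<noteq> []" "even (length W)" using assms(5) unfolding shifted_walk_def by auto
  moreover have "W ! 0 \<in> A" "W ! (length W - 1) \<in> A"
    using assms(6,7) \<open>W \<noteq> []\<close> by (simp_all add: hd_conv_nth last_conv_nth)
  ultimately obtain i j where ij: "even i" "odd j" "i < j" "j < length W" "W ! i \<in> A" "W ! j \<in> A"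
    and between: "\<And>k. i < k \<Longrightarrow> k < j \<Longrightarrow> W ! k \<notin> A"
    using even_odd_consecutive_hits[of "length W" "\<lambda>k. W ! k \<in> A"] by blast
  define W' where "W' = take (Suc j - i) (drop i W)"
  have len: "length W' = Suc j - i" and nth: "\<And>k. k < Suc j - i \<Longrightarrow> W' ! k = W ! (i + k)"
    using ij unfolding W'_def by auto
  have "W = take i W @ W' @ drop (Suc j) W"
    unfolding W'_def using take_segment_drop_eq ij by blast
  moreover have "shifted_walk V E M W'"
    unfolding W'_def using shifted_walk_segment[OF assms(5) ij(1-4)] .
  moreover have "hd W' = W ! i" "last W' = W ! j"
    using len nth[of 0] nth[of "j - i"] ij
    by (simp_all add: hd_conv_nth last_conv_nth flip: length_greater_0_conv)
  moreover have "\<forall>k. 0 < k \<and> k < length W' - 1 \<longrightarrow> W' ! k \<notin> A"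
    using len nth between by auto
  ultimately show ?thesis using ij by metis
qed

end
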